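(* Let $n>2$ and let $\mathcal{L}\subseteq\mathcal{L}_n$ be a linear subspace that is a Jordan algebra and is invariant under the conjugation action of $S_n$, and suppose $\mathcal{L}$ contains $J$ and contains at least one $S_n$-submodule isomorphic to $\{n-1,1\}$. Then exactly one of the following holds: (1) $\mathrm{EI}_n\subseteq\mathcal{L}$ and $\mathrm{Symm}_n\not\subseteq\mathcal{L}$; (2) $\mathrm{Symm}_n\subseteq\mathcal{L}$ and $\mathrm{EI}_n\not\subseteq\mathcal{L}$; (3) $\mathrm{EI}_n+\mathrm{Symm}_n\subseteq\mathcal{L}$.
   Context: $\mathbf{1}\in\mathbb{R}^n$ is the all-ones column vector; $\mathcal{L}_n=\{Q\in \mathrm{Mat}_n(\mathbb{R}): Q\mathbf{1}=0\}$; $J:=\frac1n\mathbf{1}\mathbf{1}^T-I_n$. $R_i\in\mathcal{L}_n$ has off-diagonal entries in column $i$ equal to $1$, other off-diagonal entries $0$, diagonal fixed by zero row sums; $\mathrm{EI}_n:=\operatorname{span}_{\mathbb{R}}(R_1,\dots,R_n)$. $\mathrm{Symm}_n$ is the space of symmetric matrices in $\mathcal{L}_n$ (equivalently $\operatorname{span}_{\mathbb{R}}(L_{ij}+L_{ji}: i\ne j)$, where $L_{ij}$ has $1$ at $(i,j)$, $-1$ at $(i,i)$, zeros elsewhere). For $\sigma\in S_n$, $K_\sigma$ is the permutation matrix with $e_iK_\sigma=e_{\sigma(i)}$, and $S_n$ acts by $\sigma\cdot X=K_\sigma^TXK_\sigma$. $\{n-1,1\}$ is the irreducible real $S_n$-module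 labelled by the partition $(n-1,1)$ (the standard representation). A Jordan algebra is a subspace closed under $AB+BA$. *)

theory Defs
  imports "HOL-Analysis.Analysis" "HOL-Combinatorics.Permutations"
begin

text \<open>n x n real matrices are indexed by a finite type 'n, with n = CARD('n).\<close>

definition Lspace :: "(real^'n^'n) set" where
  "Lspace = {Q. Q *v (vec 1) = 0}"

definition Jmat :: "real^'n::finite^'n" where
  "Jmat = (\<chi> i j. 1 / real CARD('n) - (if i = j then 1 else 0))"

definition Rmat :: "'n \<Rightarrow> real^'n^'n" where
  "Rmat i = (\<chi> k j. if k = j then (if k = i then 0 else -1) else (if j = i then 1 else 0))"

definition EI :: "(real^'n::finite^'n) set" where
  "EI = span (range Rmat)"

definition Symm :: "(real^'n::finite^'n) set" where
  "Symm = {Q. Q \<in> Lspace \<and> transpose Q = Q}"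

text \<open>Permutation matrix K_sigma with e_i K_sigma = e_{sigma(i)}.\<close>
definition Kmat :: "('n \<Rightarrow> 'n) \<Rightarrow> real^'n^'n" where
  "Kmat \<sigma> = (\<chi> i j. if j = \<sigma> i then 1 else 0)"

definition perm_act :: "('n::finite \<Rightarrow> 'n) \<Rightarrow> real^'n^'n \<Rightarrow> real^'n^'n" where
  "perm_act \<sigma> X = transpose (Kmat \<sigma>) ** X ** Kmat \<sigma>"

text \<open>The standard module {n-1,1}: sum-zero vectors, S_n acting by permutation matrices.\<close>
definition std_module :: "(real^'n::finite) set" where
  "std_module = {v. (\<Sum>i\<in>UNIV. v $ i) = 0}"

definition perm_vec :: "('n::finite \<Rightarrow> 'n) \<Rightarrow> real^'n \<Rightarrow> real^'n" where
  "perm_vec \<sigma> v = transpose (Kmat \<sigma>) *v v"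

definition jordan_algebra :: "(real^'n::finite^'n) set \<Rightarrow> bool" where
  "jordan_algebra L \<longleftrightarrow> subspace L \<and> (\<forall>A\<in>L. \<forall>B\<in>L. A ** B + B ** A \<in> L)"

definition Sn_invariant :: "(real^'n::finite^'n) set \<Rightarrow> bool" where
  "Sn_invariant L \<longleftrightarrow> (\<forall>\<sigma>. \<sigma> permutes (UNIV::'n set) \<longrightarrow> (\<forall>X\<in>L. perm_act \<sigma> X \<in> L))"

definition contains_std_submodule :: "(real^'n::finite^'n) set \<Rightarrow> bool" where
  "contains_std_submodule L \<longleftrightarrow>
     (\<exists>W f. subspace W \<and> W \<subseteq> L \<and> Sn_invariant W \<and> linear f \<and>
        bij_betw f std_module W \<and>
        (\<forall>\<sigma>. \<sigma> permutes (UNIV::'n set) \<longrightarrow>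
           (\<forall>v\<in>std_module. f (perm_vec \<sigma> v) = perm_act \<sigma> (f v))))"

end

theory Submission
  imports Defs
begin

text \<open>Fix a copy of the standard module in L, given by an equivariant embedding f, and three
distinct points a, b, c. Equivariance pins down X = f (e_a - e_b) up to two parameters:
X = \<alpha> (R_a - R_b) + \<beta> Y_ab, where the symmetric matrices Y_ab span a copy of the standard module
inside Symm_n. The Jordan product with J extracts the column sums of X, which are those of
n \<alpha> (R_a - R_b). So either \<alpha> \<noteq> 0 and R_a - R_b \<in> L, or \<beta> \<noteq> 0 and Y_ab \<in> L. In the first case
the S_n-orbit of R_a - R_b together with J spans EI_n; in the second the squares of the Y_xy
together with J give every L_xy + L_yx, and these span Symm_n. Hence EI_n \<subseteq> L or Symm_n \<subseteq> L,
and the trichotomy is a case distinction on these two inclusions.\<close>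

definition kronecker :: "'a \<Rightarrow> 'a \<Rightarrow> real" where
  "kronecker a i = (if i = a then 1 else 0)"

lemma sum_kronecker_snd [simp]: "(\<Sum>i\<in>(UNIV::'n::finite set). kronecker a i) = 1"
  by (simp add: kronecker_def)

lemma sum_kronecker_fst [simp]: "(\<Sum>a\<in>(UNIV::'n::finite set). kronecker a i) = 1"
  by (simp add: kronecker_def)

lemma sum_kronecker_mult [simp]: "(\<Sum>k\<in>(UNIV::'n::finite set). kronecker a k * g k) = g a"
proof -
  have "kronecker a k * g k = (if k = a then g k else 0)" for k by (simp add: kronecker_def)
  then show ?thesis by simp
qed

lemma sum_mult_kronecker [simp]: "(\<Sum>k\<in>(UNIV::'n::finite set). g k * kronecker k a) = g a"
proof -
  have "g k * kronecker k a = (if k = a then g k else 0)" for k by (simp add: kronecker_def)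
  then show ?thesis by simp
qed

lemma kronecker_transpose:
  "kronecker a (Transposition.transpose x y i) = kronecker (Transposition.transpose x y a) i"
  by (auto simp: kronecker_def Transposition.transpose_def)

subsection \<open>The permutation action on matrices and vectors\<close>

lemma sum_permutes_indicator:
  fixes g :: "'n::finite \<Rightarrow> real"
  assumes "\<sigma> permutes UNIV"
  shows "(\<Sum>k\<in>UNIV. (if i = \<sigma> k then 1 else 0) * g k) = g (inv \<sigma> i)"
proof -
  have "(if i = \<sigma> k then 1 else 0) * g k = (if k = inv \<sigma> i then g k else 0)" for k
    using permutes_inv_eq[OF assms, of i k] by auto
  then show ?thesis by simp
qed

lemma perm_act_nth:
  assumes "\<sigma> permutes UNIV"
  shows "perm_act \<sigma> X $ i $ j = X $ inv \<sigma> i $ inv \<sigma> j"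
proof -
  have "perm_act \<sigma> X $ i $ j = (\<Sum>k\<in>UNIV.
      (\<Sum>l\<in>UNIV. (if i = \<sigma> l then 1 else 0) * X$l$k) * (if j = \<sigma> k then 1 else 0))"
    by (simp add: perm_act_def matrix_matrix_mult_def Kmat_def transpose_def)
  also have "\<dots> = (\<Sum>k\<in>UNIV. (if j = \<sigma> k then 1 else 0) * X $ inv \<sigma> i $ k)"
    by (simp add: sum_permutes_indicator[OF assms] mult.commute)
  also have "\<dots> = X $ inv \<sigma> i $ inv \<sigma> j"
    by (rule sum_permutes_indicator[OF assms])
  finally show ?thesis .
qed

lemma perm_vec_nth:
  assumes "\<sigma> permutes UNIV"
  shows "perm_vec \<sigma> v $ i = v $ inv \<sigma> i"
proof -
  have "perm_vec \<sigma> v $ i = (\<Sum>k\<in>UNIV. (if i = \<sigma> k then 1 else 0) * v$k)"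
    by (simp add: perm_vec_def matrix_vector_mult_def Kmat_def transpose_def)
  also have "\<dots> = v $ inv \<sigma> i" by (rule sum_permutes_indicator[OF assms])
  finally show ?thesis .
qed

lemma perm_act_transpose_nth:
  "perm_act (Transposition.transpose a b) X $ i $ j
     = X $ Transposition.transpose a b i $ Transposition.transpose a b j"
  by (simp add: perm_act_nth permutes_swap_id)

lemma perm_vec_transpose_nth:
  "perm_vec (Transposition.transpose a b) v $ i = v $ Transposition.transpose a b i"
  by (simp add: perm_vec_nth permutes_swap_id)

lemma perm_act_transpose_diff:
  "perm_act (Transposition.transpose x y) (A - B)
     = perm_act (Transposition.transpose x y) A - perm_act (Transposition.transpose x y) B"
  by (simp add: vec_eq_iff perm_act_transpose_nth)

lemma Sn_invariant_transpose:
  "Sn_invariant L \<Longrightarrow> X \<in> L \<Longrightarrow> perm_act (Transposition.transpose a b) X \<in> L"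
  by (simp add: Sn_invariant_def permutes_swap_id)

lemma Sn_invariant_cocycle_mem:
  fixes M :: "'n::finite \<Rightarrow> 'n \<Rightarrow> real^'n^'n"
  assumes sub: "subspace L" and inv: "Sn_invariant L" and ab: "a \<noteq> b" and Mab: "M a b \<in> L"
    and perm: "\<And>x y u v. perm_act (Transposition.transpose x y) (M u v)
                 = M (Transposition.transpose x y u) (Transposition.transpose x y v)"
    and cocycle: "\<And>x y z. M x y = M x z - M y z"
  shows "M x y \<in> L"
proof -
  have Mxb: "M x b \<in> L" for x
  proof -
    consider "x = b" | "x = a" | "x \<noteq> a" "x \<noteq> b" by blast
    then show ?thesis
    proof cases
      case 1
      then show ?thesis using cocycle[of b b b] subspace_0[OF sub] by simp
    next
      case 2
      then show ?thesis using Mab by simp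
    next
      case 3
      then show ?thesis
        using Sn_invariant_transpose[OF inv Mab, of a x] perm[of a x a b] ab by simp
    qed
  qed
  show ?thesis using subspace_diff[OF sub Mxb[of x] Mxb[of y]] cocycle[of x y b] by simp
qed

definition basis_diff :: "'n \<Rightarrow> 'n \<Rightarrow> real^'n" where
  "basis_diff a b = (\<chi> i. kronecker a i - kronecker b i)"

lemma zero_in_std_module: "0 \<in> std_module"
  by (simp add: std_module_def)

lemma basis_diff_in_std_module: "basis_diff a b \<in> (std_module :: (real^'n::finite) set)"
  by (simp add: std_module_def basis_diff_def sum_subtractf)

lemma perm_vec_transpose_basis_diff:
  "perm_vec (Transposition.transpose x y) (basis_diff a b)
     = basis_diff (Transposition.transpose x y a) (Transposition.transpose x y b)"
  by (simp add: vec_eq_iff perm_vec_transpose_nth basis_diff_def kronecker_transpose)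

lemma basis_diff_split: "basis_diff a b = basis_diff a c + basis_diff c b"
  by (simp add: vec_eq_iff basis_diff_def)

lemma basis_diff_commute: "basis_diff b a = - basis_diff a b"
  by (simp add: vec_eq_iff basis_diff_def)

lemma basis_diff_nonzero: "a \<noteq> b \<Longrightarrow> basis_diff a b \<noteq> 0"
  by (auto simp: vec_eq_iff basis_diff_def kronecker_def)

subsection \<open>Zero row sums and the Jordan product with J\<close>

lemma Lspace_row_sum: "X \<in> Lspace \<Longrightarrow> (\<Sum>j\<in>UNIV. X$i$j) = 0"
  by (simp add: Lspace_def vec_eq_iff matrix_vector_mult_def)

lemma jordan_algebra_subspace: "jordan_algebra L \<Longrightarrow> subspace L"
  by (simp add: jordan_algebra_def)

lemma jordan_algebra_square:
  assumes "jordan_algebra L" "A \<in> L"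
  shows "A ** A \<in> L"
proof -
  have "A ** A + A ** A \<in> L" using assms unfolding jordan_algebra_def by blast
  then have "(1/2::real) *\<^sub>R (A ** A + A ** A) \<in> L"
    by (rule subspace_scale[OF jordan_algebra_subspace[OF assms(1)]])
  then show ?thesis by (simp add: scaleR_2[symmetric])
qed

definition column_sums :: "real^'n^'n \<Rightarrow> real^'n::finite^'n" where
  "column_sums X = (\<chi> i j. \<Sum>k\<in>UNIV. X$k$j)"

lemma column_sums_combination:
  "column_sums (x *\<^sub>R A + y *\<^sub>R B) = x *\<^sub>R column_sums A + y *\<^sub>R column_sums B"
  by (simp add: vec_eq_iff column_sums_def sum.distrib sum_distrib_left)

lemma Jmat_jordan_product:
  fixes X :: "real^'n::finite^'n"
  assumes "X \<in> Lspace"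
  shows "Jmat ** X + X ** Jmat = (1 / real CARD('n)) *\<^sub>R column_sums X - 2 *\<^sub>R X"
proof -
  have Jmat_nth: "Jmat $ i $ j = 1 / real CARD('n) - kronecker i j" for i j :: 'n
    by (simp add: Jmat_def kronecker_def)
  have "(Jmat ** X) $ i $ j = (1 / real CARD('n)) * (\<Sum>k\<in>UNIV. X$k$j) - X$i$j" for i j
    by (simp add: matrix_matrix_mult_def Jmat_nth left_diff_distrib sum_subtractf
        sum_distrib_left)
  moreover have "(X ** Jmat) $ i $ j = - X$i$j" for i j
    using Lspace_row_sum[OF assms, of i]
    by (simp add: matrix_matrix_mult_def Jmat_nth right_diff_distrib sum_subtractf
        sum_divide_distrib[symmetric])
  ultimately show ?thesis by (simp add: vec_eq_iff column_sums_def)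
qed

lemma column_sums_mem:
  fixes L :: "(real^'n::finite^'n) set"
  assumes jor: "jordan_algebra L" and "L \<subseteq> Lspace" and J: "Jmat \<in> L" and X: "X \<in> L"
  shows "column_sums X \<in> L"
proof -
  define n where "n = real CARD('n)"
  have "X \<in> Lspace" using assms(2) X by blast
  have "n \<noteq> 0" by (simp add: n_def)
  then have "column_sums X = n *\<^sub>R ((1 / n) *\<^sub>R column_sums X)" by simp
  also have "\<dots> = n *\<^sub>R (Jmat ** X + X ** Jmat + 2 *\<^sub>R X)"
    using Jmat_jordan_product[OF \<open>X \<in> Lspace\<close>] by (simp add: n_def)
  also have "\<dots> = n *\<^sub>R (Jmat ** X + X ** Jmat) + (2 * n) *\<^sub>R X"
    by (simp add: algebra_simps)
  finally have "column_sums X = n *\<^sub>R (Jmat ** X + X ** Jmat) + (2 * n) *\<^sub>R X" .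
  moreover have "Jmat ** X + X ** Jmat \<in> L" using jor J X by (simp add: jordan_algebra_def)
  ultimately show ?thesis
    using jordan_algebra_subspace[OF jor] X by (simp add: subspace_add subspace_scale)
qed

subsection \<open>Generating EI\<close>

lemma Rmat_eq: "Rmat i = (\<chi> k j. kronecker i j - (if k = j then 1 else 0))"
  by (simp add: vec_eq_iff Rmat_def kronecker_def)

lemma Rmat_diff_nth: "Rmat a $ i $ j - Rmat b $ i $ j = kronecker a j - kronecker b j"
  by (simp add: Rmat_eq)

lemma perm_act_transpose_Rmat:
  "perm_act (Transposition.transpose x y) (Rmat i) = Rmat (Transposition.transpose x y i)"
  by (simp add: vec_eq_iff Rmat_eq perm_act_transpose_nth kronecker_transpose
      inj_transpose[THEN inj_eq])

lemma column_sums_Rmat_diff: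
  "column_sums (Rmat a - Rmat b) = real CARD('n) *\<^sub>R (Rmat a - Rmat b :: real^'n::finite^'n)"
  by (simp add: vec_eq_iff column_sums_def Rmat_diff_nth)

lemma sum_Rmat: "(\<Sum>j\<in>UNIV. Rmat j) = real CARD('n) *\<^sub>R (Jmat :: real^'n::finite^'n)"
  by (simp add: vec_eq_iff sum_component Rmat_eq sum_subtractf Jmat_def right_diff_distrib)

lemma EI_subset_of_Rmat_diff:
  fixes L :: "(real^'n::finite^'n) set"
  assumes sub: "subspace L" and inv: "Sn_invariant L" and J: "Jmat \<in> L"
    and ab: "a \<noteq> b" and R: "Rmat a - Rmat b \<in> L"
  shows "EI \<subseteq> L"
proof -
  have Rdiff: "Rmat x - Rmat y \<in> L" for x y
    using Sn_invariant_cocycle_mem[where M = "\<lambda>u v. Rmat u - Rmat v", OF sub inv ab] R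
    by (simp add: perm_act_transpose_diff perm_act_transpose_Rmat)
  have Rmat_mem: "Rmat i \<in> L" for i
  proof -
    define n where "n = real CARD('n)"
    have "(\<Sum>j\<in>UNIV. Rmat i - Rmat j) = n *\<^sub>R Rmat i - n *\<^sub>R Jmat"
      by (simp add: sum_subtractf sum_Rmat n_def sum_constant_scaleR del: sum_constant)
    then have "Rmat i = (1 / n) *\<^sub>R ((\<Sum>j\<in>UNIV. Rmat i - Rmat j) + n *\<^sub>R Jmat)"
      by (simp add: n_def)
    moreover have "(\<Sum>j\<in>UNIV. Rmat i - Rmat j) \<in> L"
      using Rdiff sub by (simp add: subspace_sum)
    ultimately show ?thesis using sub J by (metis subspace_add subspace_scale)
  qed
  show ?thesis unfolding EI_def
    by (rule span_minimal) (use Rmat_mem sub in auto)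
qed

subsection \<open>Generating Symm\<close>

definition Ysym :: "'n \<Rightarrow> 'n \<Rightarrow> real^'n::finite^'n" where
  "Ysym a b = (\<chi> i j. (kronecker a i - kronecker b i) + (kronecker a j - kronecker b j)
      - real CARD('n) * (if i = j then kronecker a i - kronecker b i else 0))"

text \<open>Lsym x y is L_xy + L_yx in the notation of the paper.\<close>

definition Lsym :: "'n \<Rightarrow> 'n \<Rightarrow> real^'n::finite^'n" where
  "Lsym x y = (\<chi> i j. - ((kronecker x i - kronecker y i) * (kronecker x j - kronecker y j)))"

lemma perm_act_transpose_Ysym:
  "perm_act (Transposition.transpose x y) (Ysym a b)
     = Ysym (Transposition.transpose x y a) (Transposition.transpose x y b)"
  by (simp add: vec_eq_iff perm_act_transpose_nth Ysym_def kronecker_transpose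
      inj_transpose[THEN inj_eq])

lemma Ysym_cocycle: "Ysym a b = Ysym a c - Ysym b c"
  by (simp add: vec_eq_iff Ysym_def algebra_simps)

lemma column_sums_Ysym: "column_sums (Ysym a b) = 0"
  by (simp add: vec_eq_iff column_sums_def Ysym_def sum.distrib sum_subtractf
      sum_distrib_left[symmetric])

lemma Ysym_square_nth:
  fixes x y :: "'n::finite"
  assumes xy: "x \<noteq> y"
  defines "d \<equiv> \<lambda>k. kronecker x k - kronecker y k" and "n \<equiv> real CARD('n)"
  shows "(Ysym x y ** Ysym x y) $ i $ j =
    2 - n * (d j * d j) - n * (d i * d i) - n * (d i * d j) + n * n * (if i = j then d i * d i else 0)"
proof -
  have sum_d: "(\<Sum>k\<in>UNIV. d k) = 0" by (simp add: d_def sum_subtractf)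
  have "d k * d k = kronecker x k + kronecker y k" for k
    using xy by (auto simp: d_def kronecker_def)
  then have sum_d_squared: "(\<Sum>k\<in>UNIV. d k * d k) = 2" by (simp add: sum.distrib)
  have expand: "(d i + d k - n * (if i = k then d i else 0)) * (d k + d j - n * (if k = j then d k else 0))
     = d i * d k + d i * d j + d k * d k + d k * d j
       - (if k = j then n * (d i * d k + d k * d k) else 0)
       - (if k = i then n * (d i * d k + d i * d j) else 0)
       + (if k = i then (if i = j then n * n * (d i * d i) else 0) else 0)" for k
    by (auto simp: algebra_simps)
  have "(Ysym x y ** Ysym x y) $ i $ j = (\<Sum>k\<in>UNIV.
      (d i + d k - n * (if i = k then d i else 0)) * (d k + d j - n * (if k = j then d k else 0)))"
    unfolding matrix_matrix_mult_def Ysym_def d_def n_def by simp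
  also have "\<dots> = d i * (\<Sum>k\<in>UNIV. d k) + n * (d i * d j) + (\<Sum>k\<in>UNIV. d k * d k)
      + (\<Sum>k\<in>UNIV. d k) * d j - n * (d i * d j + d j * d j) - n * (d i * d i + d i * d j)
      + n * n * (if i = j then d i * d i else 0)"
    unfolding expand
    by (simp add: sum.distrib sum_subtractf sum_distrib_left[symmetric]
        sum_distrib_right[symmetric] n_def)
  finally show ?thesis using sum_d sum_d_squared by (simp add: algebra_simps)
qed

lemma sum_Ysym_nth:
  fixes x :: "'n::finite"
  shows "(\<Sum>z\<in>UNIV. Ysym x z $ i $ j)
     = (real CARD('n) * kronecker x i - 1) + (real CARD('n) * kronecker x j - 1)
       - real CARD('n) * (if i = j then real CARD('n) * kronecker x i - 1 else 0)"
  by (simp add: Ysym_def sum.distrib sum_subtractf sum_distrib_left[symmetric])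

lemma Lsym_eq:
  fixes x y :: "'n::finite"
  assumes xy: "x \<noteq> y"
  shows "Lsym x y = (1 / real CARD('n)) *\<^sub>R (Ysym x y ** Ysym x y) + 2 *\<^sub>R Jmat
     + (1 / real CARD('n)) *\<^sub>R ((\<Sum>z\<in>UNIV. Ysym x z) + (\<Sum>z\<in>UNIV. Ysym y z))"
proof -
  define n where "n = real CARD('n)"
  have "n \<noteq> 0" by (simp add: n_def)
  have "Lsym x y $ i $ j = ((1 / n) *\<^sub>R (Ysym x y ** Ysym x y) + 2 *\<^sub>R Jmat
     + (1 / n) *\<^sub>R ((\<Sum>z\<in>UNIV. Ysym x z) + (\<Sum>z\<in>UNIV. Ysym y z))) $ i $ j" for i j
  proof -
    have "((1 / n) *\<^sub>R (Ysym x y ** Ysym x y) + 2 *\<^sub>R (Jmat::real^'n^'n)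
        + (1 / n) *\<^sub>R ((\<Sum>z\<in>UNIV. Ysym x z) + (\<Sum>z\<in>UNIV. Ysym y z))) $ i $ j
      = (1 / n) * (2 - n * ((kronecker x j - kronecker y j) * (kronecker x j - kronecker y j))
           - n * ((kronecker x i - kronecker y i) * (kronecker x i - kronecker y i))
           - n * ((kronecker x i - kronecker y i) * (kronecker x j - kronecker y j))
           + n * n * (if i = j then (kronecker x i - kronecker y i) * (kronecker x i - kronecker y i)
                      else 0))
        + 2 * (1 / n - (if i = j then 1 else 0))
        + (1 / n) * ((n * kronecker x i - 1) + (n * kronecker x j - 1)
             - n * (if i = j then n * kronecker x i - 1 else 0)
             + (n * kronecker y i - 1) + (n * kronecker y j - 1)
             - n * (if i = j then n * kronecker y i - 1 else 0))"
      using xy by (simp add: Ysym_square_nth sum_Ysym_nth sum_component Jmat_def n_def)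
    also have "\<dots> = Lsym x y $ i $ j"
      using xy \<open>n \<noteq> 0\<close> by (auto simp: Lsym_def kronecker_def field_simps)
    finally show ?thesis by simp
  qed
  then show ?thesis by (simp add: vec_eq_iff n_def)
qed

lemma sum_sum_kronecker:
  fixes Q :: "real^'n::finite^'n"
  shows "(\<Sum>i\<in>UNIV. \<Sum>j\<in>UNIV. Q$i$j * (kronecker i k * kronecker j l)) = Q$k$l"
    and "(\<Sum>i\<in>UNIV. \<Sum>j\<in>UNIV. Q$i$j * (kronecker j k * kronecker i l)) = Q$l$k"
    and "(\<Sum>i\<in>UNIV. \<Sum>j\<in>UNIV. Q$i$j * (kronecker i k * kronecker i l))
           = (if k = l then (\<Sum>j\<in>UNIV. Q$k$j) else 0)"
    and "(\<Sum>i\<in>UNIV. \<Sum>j\<in>UNIV. Q$i$j * (kronecker j k * kronecker j l))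
           = (if k = l then (\<Sum>i\<in>UNIV. Q$i$k) else 0)"
proof -
  have "Q$i$j * (kronecker i k * kronecker j l) = (if j = l then (if i = k then Q$i$j else 0) else 0)"
    for i j by (simp add: kronecker_def)
  then show "(\<Sum>i\<in>UNIV. \<Sum>j\<in>UNIV. Q$i$j * (kronecker i k * kronecker j l)) = Q$k$l" by simp
  have "Q$i$j * (kronecker j k * kronecker i l) = (if j = k then (if i = l then Q$i$j else 0) else 0)"
    for i j by (simp add: kronecker_def)
  then show "(\<Sum>i\<in>UNIV. \<Sum>j\<in>UNIV. Q$i$j * (kronecker j k * kronecker i l)) = Q$l$k" by simp
  have "Q$i$j * (kronecker i k * kronecker i l) = (if i = k then (if k = l then Q$i$j else 0) else 0)"
    for i j by (simp add: kronecker_def)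
  then have "(\<Sum>i\<in>UNIV. \<Sum>j\<in>UNIV. Q$i$j * (kronecker i k * kronecker i l))
      = (\<Sum>j\<in>UNIV. \<Sum>i\<in>UNIV. (if i = k then (if k = l then Q$i$j else 0) else 0))"
    by (simp add: sum.swap[of _ UNIV UNIV])
  then show "(\<Sum>i\<in>UNIV. \<Sum>j\<in>UNIV. Q$i$j * (kronecker i k * kronecker i l))
      = (if k = l then (\<Sum>j\<in>UNIV. Q$k$j) else 0)" by auto
  have "Q$i$j * (kronecker j k * kronecker j l) = (if j = k then (if k = l then Q$i$j else 0) else 0)"
    for i j by (simp add: kronecker_def)
  then show "(\<Sum>i\<in>UNIV. \<Sum>j\<in>UNIV. Q$i$j * (kronecker j k * kronecker j l))
      = (if k = l then (\<Sum>i\<in>UNIV. Q$i$k) else 0)" by auto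
qed

lemma Symm_eq_sum_Lsym:
  assumes "Q \<in> Symm"
  shows "Q = (\<Sum>i\<in>UNIV. \<Sum>j\<in>UNIV. (Q$i$j / 2) *\<^sub>R Lsym i j)"
proof -
  have Q_sym: "Q$l$k = Q$k$l" for k l
    using assms by (metis (mono_tags, lifting) Symm_def mem_Collect_eq transpose_def vec_lambda_beta)
  have row_sum: "(\<Sum>j\<in>UNIV. Q$k$j) = 0" for k
    using assms Lspace_row_sum by (auto simp: Symm_def)
  then have column_sum: "(\<Sum>i\<in>UNIV. Q$i$k) = 0" for k
    by (simp add: Q_sym[of _ k])
  have "(\<Sum>i\<in>UNIV. \<Sum>j\<in>UNIV. (Q$i$j / 2) *\<^sub>R Lsym i j) $ k $ l = Q$k$l" for k l
  proof -
    have expand: "(Q$i$j / 2) * (- ((kronecker i k - kronecker j k) * (kronecker i l - kronecker j l)))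
        = (1/2) * (Q$i$j * (kronecker i k * kronecker j l))
          + (1/2) * (Q$i$j * (kronecker j k * kronecker i l))
          - (1/2) * (Q$i$j * (kronecker i k * kronecker i l))
          - (1/2) * (Q$i$j * (kronecker j k * kronecker j l))" for i j
      by (simp add: algebra_simps)
    have "(\<Sum>i\<in>UNIV. \<Sum>j\<in>UNIV. (Q$i$j / 2) *\<^sub>R Lsym i j) $ k $ l
        = (\<Sum>i\<in>UNIV. \<Sum>j\<in>UNIV.
             (Q$i$j / 2) * (- ((kronecker i k - kronecker j k) * (kronecker i l - kronecker j l))))"
      by (simp add: sum_component Lsym_def)
    also have "\<dots> = (1/2) * Q$k$l + (1/2) * Q$l$k
          - (1/2) * (if k = l then (\<Sum>j\<in>UNIV. Q$k$j) else 0)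
          - (1/2) * (if k = l then (\<Sum>i\<in>UNIV. Q$i$k) else 0)"
      unfolding expand
      by (simp only: sum.distrib sum_subtractf sum_distrib_left[symmetric] sum_sum_kronecker)
    also have "\<dots> = Q$k$l"
      using row_sum[of k] column_sum[of k] Q_sym[of k l] by (cases "k = l") simp_all
    finally show ?thesis .
  qed
  then show ?thesis by (simp add: vec_eq_iff)
qed

lemma Symm_subset_of_Ysym:
  fixes L :: "(real^'n::finite^'n) set"
  assumes jor: "jordan_algebra L" and inv: "Sn_invariant L" and J: "Jmat \<in> L"
    and ab: "a \<noteq> b" and Y: "Ysym a b \<in> L"
  shows "Symm \<subseteq> L"
proof -
  have sub: "subspace L" by (rule jordan_algebra_subspace[OF jor])
  have Ysym_mem: "Ysym x y \<in> L" for x y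
    using Sn_invariant_cocycle_mem[where M = Ysym, OF sub inv ab Y]
    by (simp add: perm_act_transpose_Ysym Ysym_cocycle[symmetric])
  have Lsym_mem: "Lsym x y \<in> L" for x y
  proof (cases "x = y")
    case True
    then have "Lsym x y = 0" by (simp add: vec_eq_iff Lsym_def)
    then show ?thesis using subspace_0[OF sub] by simp
  next
    case False
    have "(\<Sum>z\<in>UNIV. Ysym x z) \<in> L" "(\<Sum>z\<in>UNIV. Ysym y z) \<in> L"
      using Ysym_mem sub by (simp_all add: subspace_sum)
    then show ?thesis
      unfolding Lsym_eq[OF False]
      using sub jordan_algebra_square[OF jor Ysym_mem[of x y]] J
      by (intro subspace_add subspace_scale) auto
  qed
  show ?thesis
  proof
    fix Q :: "real^'n^'n"
    assume "Q \<in> Symm"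
    have "(\<Sum>i\<in>UNIV. \<Sum>j\<in>UNIV. (Q$i$j / 2) *\<^sub>R Lsym i j) \<in> L"
      using sub Lsym_mem by (intro subspace_sum subspace_scale) auto
    then show "Q \<in> L" using Symm_eq_sum_Lsym[OF \<open>Q \<in> Symm\<close>] by simp
  qed
qed

subsection \<open>The image of e_a - e_b under an equivariant embedding\<close>

lemma sum_UNIV_remove_two:
  fixes g :: "'n::finite \<Rightarrow> real"
  assumes "a \<noteq> b"
  shows "(\<Sum>j\<in>UNIV. g j) = g a + g b + (\<Sum>j\<in>UNIV - {a, b}. g j)"
proof -
  have "UNIV = insert a (insert b (UNIV - {a, b}))" by auto
  then show ?thesis using assms by (metis (no_types) Diff_iff finite insert_iff sum.insert add.assoc)
qed

lemma card_UNIV_remove_two: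
  assumes "(a::'n::finite) \<noteq> b"
  shows "real (card (UNIV - {a, b})) = real CARD('n) - 2"
proof -
  have "card {a, b} \<le> CARD('n)" by (rule card_mono) auto
  moreover have "card {a, b} = 2" using assms by simp
  ultimately show ?thesis by (simp add: card_Diff_subset of_nat_diff)
qed

text \<open>The symmetries of e_a - e_b under the transpositions (a b) and (c d), d \<notin> {a, b}, and the
  relation e_a - e_b = (e_a - e_c) + (e_c - e_b) leave only two free entries.\<close>

lemma matrix_eq_of_symmetries:
  fixes X :: "real^'n::finite^'n"
  assumes X: "X \<in> Lspace" and ab: "a \<noteq> b" and c: "c \<notin> {a, b}"
    and anti: "perm_act (Transposition.transpose a b) X = - X"
    and fixed: "\<And>d. d \<notin> {a, b} \<Longrightarrow> perm_act (Transposition.transpose c d) X = X"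
    and split: "X = perm_act (Transposition.transpose b c) X + perm_act (Transposition.transpose a c) X"
  shows "X = (X$c$a - X$a$c) *\<^sub>R (Rmat a - Rmat b) + X$a$c *\<^sub>R Ysym a b"
proof -
  from c have ac: "a \<noteq> c" and bc: "b \<noteq> c" by auto
  define n where "n = real CARD('n)"
  define q r where "q = X$a$c" and "r = X$c$a"
  have anti_nth: "X $ Transposition.transpose a b i $ Transposition.transpose a b j = - X$i$j"
    for i j using arg_cong[OF anti, of "\<lambda>M. M $ i $ j"] by (simp add: perm_act_transpose_nth)
  have fixed_nth: "X $ Transposition.transpose c d i $ Transposition.transpose c d j = X$i$j"
    if "d \<notin> {a, b}" for d i j
    using arg_cong[OF fixed[OF that], of "\<lambda>M. M $ i $ j"] by (simp add: perm_act_transpose_nth)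
  have Xad: "X$a$d = q" and Xda: "X$d$a = r" if "d \<notin> {a, b}" for d
  proof -
    have "a \<noteq> d" using that by auto
    then show "X$a$d = q" "X$d$a = r" using ac
      using fixed_nth[OF that, of a c] fixed_nth[OF that, of c a] by (simp_all add: q_def r_def)
  qed
  have Xbd: "X$b$d = - q" and Xdb: "X$d$b = - r" if "d \<notin> {a, b}" for d
    using anti_nth[of a d] anti_nth[of d a] Xad[OF that] Xda[OF that] that by simp_all
  have Xrest: "X$i$j = 0" if "i \<notin> {a, b}" "j \<notin> {a, b}" for i j
    using anti_nth[of i j] that by simp
  have Xab: "X$a$b = q - r"
    using arg_cong[OF split, of "\<lambda>M. M $ a $ b"] Xdb[of c] ab ac bc c
    by (simp add: perm_act_transpose_nth q_def)
  have Xba: "X$b$a = r - q" and Xbb: "X$b$b = - X$a$a"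
    using anti_nth[of a b] anti_nth[of a a] Xab by simp_all
  have "(\<Sum>j\<in>UNIV - {a, b}. X$a$j) = (n - 2) * q"
    using Xad card_UNIV_remove_two[OF ab] by (simp add: n_def)
  then have Xaa: "X$a$a = (r - q) - (n - 2) * q"
    using Lspace_row_sum[OF X, of a] sum_UNIV_remove_two[OF ab, of "\<lambda>j. X$a$j"] Xab by simp
  have "X$i$j = (r - q) * (kronecker a j - kronecker b j) + q * Ysym a b $ i $ j" for i j
  proof -
    have Y: "Ysym a b $ i $ j = (kronecker a i - kronecker b i) + (kronecker a j - kronecker b j)
        - n * (if i = j then kronecker a i - kronecker b i else 0)"
      by (simp add: Ysym_def n_def)
    consider "i = a" | "i = b" | "i \<notin> {a, b}" by blast
    moreover consider "j = a" | "j = b" | "j \<notin> {a, b}" by blast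
    ultimately show ?thesis
      unfolding Y using ab
      by cases (cases, auto simp: kronecker_def Xaa Xbb Xab Xba Xad Xda Xbd Xdb Xrest algebra_simps)+
  qed
  then have "X = (r - q) *\<^sub>R (Rmat a - Rmat b) + q *\<^sub>R Ysym a b"
    by (simp add: vec_eq_iff Rmat_diff_nth)
  then show ?thesis unfolding q_def r_def .
qed

lemma equivariant_image_basis_diff:
  fixes f :: "real^'n::finite \<Rightarrow> real^'n^'n"
  assumes lin: "linear f"
    and eqv: "\<And>\<sigma> v. \<sigma> permutes UNIV \<Longrightarrow> v \<in> std_module \<Longrightarrow> f (perm_vec \<sigma> v) = perm_act \<sigma> (f v)"
    and img: "f ` std_module \<subseteq> Lspace" and ab: "a \<noteq> b" and c: "c \<notin> {a, b}"
  defines "X \<equiv> f (basis_diff a b)"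
  shows "X = (X$c$a - X$a$c) *\<^sub>R (Rmat a - Rmat b) + X$a$c *\<^sub>R Ysym a b"
proof (rule matrix_eq_of_symmetries[OF _ ab c])
  from c have ac: "a \<noteq> c" and bc: "b \<noteq> c" by auto
  have perm: "perm_act (Transposition.transpose x y) X
      = f (basis_diff (Transposition.transpose x y a) (Transposition.transpose x y b))" for x y
    using eqv[OF permutes_swap_id basis_diff_in_std_module]
    by (simp add: X_def perm_vec_transpose_basis_diff)
  show "X \<in> Lspace" using img basis_diff_in_std_module by (auto simp: X_def)
  show "perm_act (Transposition.transpose a b) X = - X"
    using perm[of a b] by (simp add: X_def basis_diff_commute[of a b] linear_neg[OF lin])
  show "perm_act (Transposition.transpose c d) X = X" if "d \<notin> {a, b}" for d
  proof -
    have "a \<noteq> d" "b \<noteq> d" using that by auto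
    then show ?thesis using perm[of c d] ac bc by (simp add: X_def)
  qed
  show "X = perm_act (Transposition.transpose b c) X + perm_act (Transposition.transpose a c) X"
    using perm[of b c] perm[of a c] ab c ac bc
    by (simp add: X_def basis_diff_split[of a b c] linear_add[OF lin])
qed

lemma EI_subset_or_Symm_subset:
  fixes L :: "(real^'n::finite^'n) set"
  assumes card: "CARD('n) > 2" and LL: "L \<subseteq> Lspace" and jor: "jordan_algebra L"
    and inv: "Sn_invariant L" and J: "Jmat \<in> L" and std: "contains_std_submodule L"
  shows "EI \<subseteq> L \<or> Symm \<subseteq> L"
proof -
  have sub: "subspace L" by (rule jordan_algebra_subspace[OF jor])
  obtain T :: "'n set" where "card T = 3"
    using obtain_subset_with_card_n[of 3 "UNIV :: 'n set"] card by auto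
  then obtain a b c :: 'n where ab: "a \<noteq> b" and c: "c \<notin> {a, b}"
    by (auto simp: card_3_iff)
  obtain W f where W: "W \<subseteq> L" and lin: "linear f" and bij: "bij_betw f std_module W"
    and eqv: "\<And>\<sigma> v. \<sigma> permutes UNIV \<Longrightarrow> v \<in> std_module \<Longrightarrow> f (perm_vec \<sigma> v) = perm_act \<sigma> (f v)"
    using std unfolding contains_std_submodule_def by blast
  define X where "X = f (basis_diff a b)"
  define \<alpha> \<beta> where "\<alpha> = X$c$a - X$a$c" and "\<beta> = X$a$c"
  have X_mem: "X \<in> L"
    using bij_betw_apply[OF bij basis_diff_in_std_module] W by (auto simp: X_def)
  have X_eq: "X = \<alpha> *\<^sub>R (Rmat a - Rmat b) + \<beta> *\<^sub>R Ysym a b"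
    unfolding X_def \<alpha>_def \<beta>_def
    by (rule equivariant_image_basis_diff[OF lin eqv _ ab c])
      (use bij_betw_imp_surj_on[OF bij] W LL in auto)
  have "X \<noteq> 0"
    using bij_betw_imp_inj_on[OF bij] basis_diff_nonzero[OF ab] linear_0[OF lin]
      basis_diff_in_std_module[of a b] zero_in_std_module
    by (metis X_def inj_onD)
  show ?thesis
  proof (cases "\<alpha> = 0")
    case False
    have "column_sums X = (real CARD('n) * \<alpha>) *\<^sub>R (Rmat a - Rmat b)"
      using column_sums_combination[of \<alpha> "Rmat a - Rmat b" \<beta> "Ysym a b"]
      by (simp add: X_eq column_sums_Rmat_diff column_sums_Ysym)
    moreover have "column_sums X \<in> L" by (rule column_sums_mem[OF jor LL J X_mem])
    ultimately have "(1 / (real CARD('n) * \<alpha>)) *\<^sub>R ((real CARD('n) * \<alpha>) *\<^sub>R (Rmat a - Rmat b)) \<in> L"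
      using subspace_scale[OF sub] by metis
    then have "Rmat a - Rmat b \<in> L" using False by simp
    then show ?thesis using EI_subset_of_Rmat_diff[OF sub inv J ab] by blast
  next
    case True
    with X_eq \<open>X \<noteq> 0\<close> have "\<beta> \<noteq> 0" and "X = \<beta> *\<^sub>R Ysym a b" by auto
    then have "Ysym a b \<in> L"
      using subspace_scale[OF sub X_mem, of "1 / \<beta>"] by simp
    then show ?thesis using Symm_subset_of_Ysym[OF jor inv J ab] by blast
  qed
qed

theorem mainTheorem14:
  fixes L :: "(real^'n::finite^'n) set"
  assumes "CARD('n) > 2"
    and "L \<subseteq> Lspace"
    and "jordan_algebra L"
    and "Sn_invariant L"
    and "Jmat \<in> L"
    and "contains_std_submodule L"
  shows "let c1 = (EI \<subseteq> L \<and> \<not> Symm \<subseteq> L);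
             c2 = (Symm \<subseteq> L \<and> \<not> EI \<subseteq> L);
             c3 = ({A + B | A B. A \<in> EI \<and> B \<in> Symm} \<subseteq> L)
         in (c1 \<and> \<not> c2 \<and> \<not> c3) \<or> (\<not> c1 \<and> c2 \<and> \<not> c3) \<or> (\<not> c1 \<and> \<not> c2 \<and> c3)"
proof -
  have "0 \<in> EI" by (simp add: EI_def span_zero)
  moreover have "0 \<in> Symm" by (simp add: Symm_def Lspace_def transpose_def vec_eq_iff)
  ultimately have "{A + B | A B. A \<in> EI \<and> B \<in> Symm} \<subseteq> L \<longleftrightarrow> EI \<subseteq> L \<and> Symm \<subseteq> L"
    using jordan_algebra_subspace[OF assms(3)] by (fastforce intro: subspace_add)
  then show ?thesis
    using EI_subset_or_Symm_subset[OF assms] unfolding Let_def by blast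
qed

end
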